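(* Let $\mathcal{X}\subset\mathbb{R}$ be compact and let $p$ be a continuous probability density on $\mathcal{X}$ with $\inf_{x\in\mathcal{X}}p(x)>\delta$ for some $\delta>0$. Then for every $\epsilon>0$ there exist an integer $N\ge1$ and real constants $\mu_i\in\mathbb{R}$, $\sigma_i>0$ ($i=1,\dots,N$) such that, defining $$F_N(x)=\frac{1}{N}\sum_{i=1}^N \sigma\!\left(\frac{x-\mu_i}{\sigma_i}\right)$$ and $Y=\Phi^{-1}(F_N(X))$ for $X\sim p$, the distribution of $Y$ satisfies $\mathrm{KL}(\mathrm{Law}(Y)\,\|\,\mathcal{N}(0,1))<\epsilon$.
   Context: $\sigma(t)=1/(1+e^{-t})$ is the sigmoid function; $\Phi$ is the CDF of the standard normal distribution $\mathcal{N}(0,1)$ and $\Phi^{-1}$ its inverse; $\mathrm{KL}$ is the Kullback–Leibler divergence. *)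

theory Defs
  imports "HOL-Probability.Probability"
begin

definition sigmoid :: "real \<Rightarrow> real" where
  "sigmoid t = 1 / (1 + exp (- t))"

definition Phi :: "real \<Rightarrow> real" where
  "Phi x = measure (density lborel std_normal_density) {..x}"

definition Phi_inv :: "real \<Rightarrow> real" where
  "Phi_inv y = (THE x. Phi x = y)"

text \<open>Note the library's KL_divergence b M N takes the reference measure M first.\<close>
definition KL_div :: "real measure \<Rightarrow> real measure \<Rightarrow> ereal" where
  "KL_div P Q =
     (if sets P = sets Q \<and> absolutely_continuous Q P
         \<and> integrable P (entropy_density (exp 1) Q P)
      then ereal (KL_divergence (exp 1) Q P) else \<infinity>)"

end

theory Submission
  imports Defs "HOL-Real_Asymp.Real_Asymp"
begin

text \<open>Since \<open>F\<^sub>N\<close> is a strictly increasing distribution function with positive density \<open>f\<^sub>N\<close>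
  (a mixture of logistic densities), \<open>\<Phi>\<^sup>-\<^sup>1 \<circ> F\<^sub>N\<close> is a bijection pushing \<open>f\<^sub>N\<close> to the standard
  normal law, so \<open>KL(Law(Y) \<parallel> N(0,1)) = KL(p \<parallel> f\<^sub>N) \<le> log sup (p / f\<^sub>N)\<close>. It thus suffices
  to find a mixture with \<open>f\<^sub>N \<ge> e\<^sup>-\<^sup>\<epsilon>\<^sup>/\<^sup>2 p\<close> on \<open>S\<close>. Extend \<open>p\<close> continuously to a function of
  barely larger mass, sample it on a fine grid and smooth the samples with logistic kernels of
  small scale: this reproduces \<open>p\<close> on \<open>S\<close> up to a small additive error, which \<open>p \<ge> \<delta>\<close> turns
  into a relative one. Finally round the grid weights to multiples of \<open>1 / N\<close>.\<close>

definition logistic_density :: "real \<Rightarrow> real" where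
  "logistic_density t = sigmoid t * (1 - sigmoid t)"

definition logistic_kernel :: "real \<Rightarrow> real \<Rightarrow> real" where
  "logistic_kernel s t = logistic_density (t / s) / s"

lemma sigmoid_pos: "0 < sigmoid t"
  unfolding sigmoid_def by (simp add: add_pos_pos)

lemma sigmoid_less_1: "sigmoid t < 1"
  unfolding sigmoid_def by (simp add: add_pos_pos)

lemma one_minus_sigmoid: "1 - sigmoid t = exp (- t) / (1 + exp (- t))"
proof -
  have "1 + exp (- t) \<noteq> 0" by (smt (verit) exp_gt_zero)
  then show ?thesis unfolding sigmoid_def by (simp add: field_simps)
qed

lemma sigmoid_le_exp: "sigmoid t \<le> exp t"
proof -
  have "sigmoid t = exp t / (exp t + 1)"
    by (simp add: sigmoid_def exp_minus field_simps add_pos_pos)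
  also have "\<dots> \<le> exp t" by (simp add: divide_le_eq add_pos_pos)
  finally show ?thesis .
qed

lemma one_minus_sigmoid_le_exp: "1 - sigmoid t \<le> exp (- t)"
  unfolding one_minus_sigmoid by (simp add: divide_le_eq add_pos_pos)

lemma DERIV_sigmoid: "(sigmoid has_real_derivative logistic_density t) (at t)"
proof -
  have "1 + exp (- t) \<noteq> 0" by (smt (verit) exp_gt_zero)
  then have "((\<lambda>t. 1 / (1 + exp (- t))) has_real_derivative exp (- t) / (1 + exp (- t))\<^sup>2) (at t)"
    by (auto intro!: derivative_eq_intros simp: power2_eq_square)
  moreover have "exp (- t) / (1 + exp (- t))\<^sup>2 = logistic_density t"
    unfolding logistic_density_def one_minus_sigmoid by (simp add: sigmoid_def power2_eq_square)
  ultimately show ?thesis unfolding sigmoid_def[abs_def] by simp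
qed

lemma DERIV_sigmoid_affine:
  assumes "s \<noteq> 0"
  shows "((\<lambda>x. sigmoid ((x - m) / s)) has_real_derivative logistic_kernel s (x - m)) (at x)"
proof -
  have "((\<lambda>x. (x - m) / s) has_real_derivative 1 / s) (at x)"
    using assms by (auto intro!: derivative_eq_intros)
  from DERIV_chain2[OF DERIV_sigmoid this] show ?thesis
    by (simp add: logistic_kernel_def)
qed

lemma logistic_density_pos: "0 < logistic_density t"
  using sigmoid_pos[of t] sigmoid_less_1[of t] by (simp add: logistic_density_def)

lemma logistic_density_le_quarter: "logistic_density t \<le> 1 / 4"
proof -
  have "0 \<le> (sigmoid t - 1 / 2)\<^sup>2" by simp
  then show ?thesis unfolding logistic_density_def by (simp add: power2_eq_square algebra_simps)
qed

lemma logistic_density_le_exp_abs: "logistic_density t \<le> exp (- \<bar>t\<bar>)"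
proof (cases "0 \<le> t")
  case True
  have "logistic_density t \<le> 1 - sigmoid t"
    using sigmoid_pos[of t] sigmoid_less_1[of t]
    unfolding logistic_density_def by (simp add: mult_le_cancel_right1)
  then show ?thesis using True one_minus_sigmoid_le_exp[of t] by simp
next
  case False
  have "logistic_density t \<le> sigmoid t"
    using sigmoid_pos[of t] sigmoid_less_1[of t]
    unfolding logistic_density_def by (simp add: mult_le_cancel_left1)
  then show ?thesis using False sigmoid_le_exp[of t] by simp
qed

lemma abs_logistic_density_diff_le: "\<bar>logistic_density a - logistic_density b\<bar> \<le> \<bar>a - b\<bar> / 4"
proof -
  have deriv: "(logistic_density has_real_derivative logistic_density t * (1 - 2 * sigmoid t)) (at t)"
    for t
  proof -
    have "((\<lambda>t. sigmoid t * (1 - sigmoid t)) has_real_derivative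
        logistic_density t * (1 - sigmoid t) + sigmoid t * (- logistic_density t)) (at t)"
      by (auto intro!: derivative_eq_intros DERIV_sigmoid)
    then show ?thesis
      unfolding logistic_density_def[abs_def] by (simp add: algebra_simps logistic_density_def)
  qed
  have bound: "norm (logistic_density t * (1 - 2 * sigmoid t)) \<le> 1 / 4" for t
  proof -
    have "\<bar>logistic_density t\<bar> * \<bar>1 - 2 * sigmoid t\<bar> \<le> 1 / 4 * 1"
      using logistic_density_le_quarter[of t] logistic_density_pos[of t]
        sigmoid_pos[of t] sigmoid_less_1[of t]
      by (intro mult_mono) auto
    then show ?thesis by (simp add: abs_mult)
  qed
  have "norm (logistic_density a - logistic_density b) \<le> 1 / 4 * norm (a - b)"
    by (rule field_differentiable_bound[OF convex_UNIV _ bound])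
       (auto intro: has_field_derivative_at_within deriv)
  then show ?thesis by simp
qed

lemma sigmoid_diff_le:
  assumes "0 \<le> d"
  shows "sigmoid u - sigmoid (u - d) \<le> d * logistic_density u + d\<^sup>2 / 4"
proof (cases "d = 0")
  case False
  with assms have "u - d < u" by simp
  then obtain z where z: "u - d < z" "z < u" "sigmoid u - sigmoid (u - d) = d * logistic_density z"
    using MVT2[of "u - d" u sigmoid logistic_density] DERIV_sigmoid by auto
  have "logistic_density z \<le> logistic_density u + d / 4"
    using abs_logistic_density_diff_le[of z u] z by (simp add: abs_if split: if_splits)
  then have "d * logistic_density z \<le> d * (logistic_density u + d / 4)"
    using assms by (simp add: mult_left_mono)
  then show ?thesis using z by (simp add: power2_eq_square algebra_simps)
qed simp

lemma logistic_kernel_nonneg: "0 < s \<Longrightarrow> 0 \<le> logistic_kernel s t"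
  unfolding logistic_kernel_def using logistic_density_pos[of "t / s"] by simp

lemma logistic_kernel_le: "0 < s \<Longrightarrow> logistic_kernel s t \<le> 1 / (4 * s)"
  unfolding logistic_kernel_def using logistic_density_le_quarter[of "t / s"]
  by (simp add: divide_simps)

lemma logistic_kernel_tail_le:
  assumes "0 < s" "r \<le> \<bar>t\<bar>"
  shows "logistic_kernel s t \<le> exp (- (r / s)) / s"
proof -
  have "r / s \<le> \<bar>t / s\<bar>" using assms by (simp add: divide_right_mono abs_div)
  then have "logistic_density (t / s) \<le> exp (- (r / s))"
    using logistic_density_le_exp_abs[of "t / s"] by (meson exp_le_cancel_iff neg_le_iff_le order_trans)
  then show ?thesis unfolding logistic_kernel_def using assms by (simp add: divide_right_mono)
qed

definition logistic_mixture_cdf :: "nat \<Rightarrow> (nat \<Rightarrow> real) \<Rightarrow> (nat \<Rightarrow> real) \<Rightarrow> real \<Rightarrow> real" where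
  "logistic_mixture_cdf N \<mu> \<sigma> x = (1 / real N) * (\<Sum>i=1..N. sigmoid ((x - \<mu> i) / \<sigma> i))"

definition logistic_mixture_density :: "nat \<Rightarrow> (nat \<Rightarrow> real) \<Rightarrow> (nat \<Rightarrow> real) \<Rightarrow> real \<Rightarrow> real" where
  "logistic_mixture_density N \<mu> \<sigma> x = (1 / real N) * (\<Sum>i=1..N. logistic_kernel (\<sigma> i) (x - \<mu> i))"

lemma DERIV_logistic_mixture_cdf:
  assumes "\<forall>i\<in>{1..N}. 0 < \<sigma> i"
  shows "(logistic_mixture_cdf N \<mu> \<sigma> has_real_derivative logistic_mixture_density N \<mu> \<sigma> x) (at x)"
  unfolding logistic_mixture_cdf_def[abs_def] logistic_mixture_density_def
  using assms by (intro DERIV_cmult DERIV_sum DERIV_sigmoid_affine) force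

lemma logistic_mixture_density_pos:
  assumes "N \<ge> 1" "\<forall>i\<in>{1..N}. 0 < \<sigma> i"
  shows "0 < logistic_mixture_density N \<mu> \<sigma> x"
proof -
  have "0 < (\<Sum>i=1..N. logistic_kernel (\<sigma> i) (x - \<mu> i))"
    using assms logistic_density_pos by (intro sum_pos) (auto simp: logistic_kernel_def)
  then show ?thesis using assms unfolding logistic_mixture_density_def by simp
qed

lemma logistic_mixture_density_measurable:
  "logistic_mixture_density N \<mu> \<sigma> \<in> borel_measurable borel"
  unfolding logistic_mixture_density_def[abs_def] logistic_kernel_def logistic_density_def
    sigmoid_def by measurable

lemma logistic_mixture_cdf_tendsto_at_bot:
  assumes "\<forall>i\<in>{1..N}. 0 < \<sigma> i"
  shows "(logistic_mixture_cdf N \<mu> \<sigma> \<longlongrightarrow> 0) at_bot"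
proof -
  have "((\<lambda>x. sigmoid ((x - \<mu> i) / \<sigma> i)) \<longlongrightarrow> 0) at_bot" if "i \<in> {1..N}" for i
  proof -
    have "0 < \<sigma> i" using assms that by blast
    then show ?thesis unfolding sigmoid_def by real_asymp
  qed
  then have "((\<lambda>x. \<Sum>i=1..N. sigmoid ((x - \<mu> i) / \<sigma> i)) \<longlongrightarrow> (\<Sum>i=1..N. 0)) at_bot"
    by (intro tendsto_sum) auto
  from tendsto_mult_left[OF this, of "1 / real N"] show ?thesis
    unfolding logistic_mixture_cdf_def[abs_def] by simp
qed

lemma logistic_mixture_cdf_tendsto_at_top:
  assumes "N \<ge> 1" "\<forall>i\<in>{1..N}. 0 < \<sigma> i"
  shows "(logistic_mixture_cdf N \<mu> \<sigma> \<longlongrightarrow> 1) at_top"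
proof -
  have "((\<lambda>x. sigmoid ((x - \<mu> i) / \<sigma> i)) \<longlongrightarrow> 1) at_top" if "i \<in> {1..N}" for i
  proof -
    have "0 < \<sigma> i" using assms that by blast
    then show ?thesis unfolding sigmoid_def by real_asymp
  qed
  then have "((\<lambda>x. \<Sum>i=1..N. sigmoid ((x - \<mu> i) / \<sigma> i)) \<longlongrightarrow> (\<Sum>i=1..N. 1)) at_top"
    by (intro tendsto_sum) auto
  from tendsto_mult_left[OF this, of "1 / real N"] show ?thesis
    using assms unfolding logistic_mixture_cdf_def[abs_def] by simp
qed

lemma tendsto_0_1_IVT:
  fixes G :: "real \<Rightarrow> real"
  assumes "\<And>x. isCont G x" "(G \<longlongrightarrow> 0) at_bot" "(G \<longlongrightarrow> 1) at_top" "0 < u" "u < 1"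
  obtains x where "G x = u"
proof -
  obtain a where a: "\<And>x. x \<le> a \<Longrightarrow> G x < u"
    using order_tendstoD(2)[OF assms(2,4)] by (auto simp: eventually_at_bot_linorder)
  obtain b where b: "\<And>x. b \<le> x \<Longrightarrow> u < G x"
    using order_tendstoD(1)[OF assms(3,5)] by (auto simp: eventually_at_top_linorder)
  have "\<exists>x. min a b \<le> x \<and> x \<le> max a b \<and> G x = u"
    using a[of "min a b"] b[of "max a b"] assms(1)
    by (intro IVT') (auto intro: continuous_at_imp_continuous_on less_imp_le)
  then show ?thesis using that by blast
qed

abbreviation std_normal :: "real measure" where
  "std_normal \<equiv> density lborel std_normal_density"

lemma real_distribution_std_normal: "real_distribution std_normal"
proof -
  interpret prob_space std_normal using prob_space_normal_density[of 1 0] by simp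
  show ?thesis by unfold_locales simp
qed

interpretation std_normal: real_distribution std_normal
  by (rule real_distribution_std_normal)

lemma Phi_eq_cdf: "Phi = cdf std_normal"
  by (simp add: Phi_def[abs_def] cdf_def)

lemma isCont_Phi: "isCont Phi x"
proof -
  have "emeasure std_normal {x} = 0"
    by (subst emeasure_density) (auto intro!: nn_integral_null_set)
  then show ?thesis unfolding Phi_eq_cdf by (simp add: std_normal.isCont_cdf measure_def)
qed

lemma Phi_strict_mono: "strict_mono Phi"
proof
  fix x y :: real assume xy: "x < y"
  define c where "c = std_normal_density (max \<bar>x\<bar> \<bar>y\<bar>)"
  have c: "0 < c" unfolding c_def by (simp add: normal_density_pos)
  have le: "c \<le> std_normal_density t" if "t \<in> {x<..y}" for t
  proof -
    have "t\<^sup>2 \<le> (max \<bar>x\<bar> \<bar>y\<bar>)\<^sup>2"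
      using that by (simp only: abs_le_square_iff[symmetric]) auto
    then show ?thesis unfolding c_def std_normal_density_def by (intro mult_left_mono) auto
  qed
  have "ennreal (c * (y - x)) = (\<integral>\<^sup>+t. ennreal c * indicator {x<..y} t \<partial>lborel)"
    using xy c by (simp add: nn_integral_cmult_indicator ennreal_mult)
  also have "\<dots> \<le> (\<integral>\<^sup>+t. ennreal (std_normal_density t) * indicator {x<..y} t \<partial>lborel)"
    using le by (intro nn_integral_mono) (auto split: split_indicator intro: ennreal_leI)
  also have "\<dots> = ennreal (measure std_normal {x<..y})"
    by (subst emeasure_density[symmetric]) (auto simp: std_normal.emeasure_eq_measure)
  finally have "c * (y - x) \<le> measure std_normal {x<..y}"
    by (subst (asm) ennreal_le_iff) auto
  moreover have "0 < c * (y - x)" using c xy by simp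
  ultimately show "Phi x < Phi y"
    unfolding Phi_eq_cdf using std_normal.cdf_diff_eq[OF xy] by simp
qed

lemma Phi_tendsto_at_bot: "(Phi \<longlongrightarrow> 0) at_bot"
  unfolding Phi_eq_cdf by (rule std_normal.cdf_lim_at_bot)

lemma Phi_tendsto_at_top: "(Phi \<longlongrightarrow> 1) at_top"
  unfolding Phi_eq_cdf by (rule std_normal.cdf_lim_at_top_prob)

lemma Phi_pos: "0 < Phi y"
  using std_normal.cdf_nonneg[of "y - 1"] Phi_strict_mono[THEN strict_monoD, of "y - 1" y]
  unfolding Phi_eq_cdf by simp

lemma Phi_less_1: "Phi y < 1"
  using std_normal.cdf_bounded_prob[of "y + 1"] Phi_strict_mono[THEN strict_monoD, of y "y + 1"]
  unfolding Phi_eq_cdf by simp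

lemma Phi_inv_Phi [simp]: "Phi_inv (Phi x) = x"
  unfolding Phi_inv_def using strict_mono_eq[OF Phi_strict_mono] by auto

lemma Phi_Phi_inv:
  assumes "0 < u" "u < 1"
  shows "Phi (Phi_inv u) = u"
proof -
  obtain x where "Phi x = u"
    using tendsto_0_1_IVT[OF isCont_Phi Phi_tendsto_at_bot Phi_tendsto_at_top assms] .
  then show ?thesis by auto
qed

lemma Phi_inv_le_iff:
  assumes "0 < u" "u < 1"
  shows "Phi_inv u \<le> y \<longleftrightarrow> u \<le> Phi y"
  using strict_mono_less_eq[OF Phi_strict_mono, of "Phi_inv u" y] Phi_Phi_inv[OF assms] by simp

lemma abs_mult_ln_le:
  fixes x c :: real
  assumes "0 \<le> x" "x \<le> c"
  shows "\<bar>x * ln x\<bar> \<le> 1 + \<bar>c * ln c\<bar>"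
proof (cases "x \<le> 1")
  case True
  show ?thesis
  proof (cases "x = 0")
    case False
    with assms have x: "0 < x" by simp
    have "- ln x \<le> 1 / x - 1"
      using ln_le_minus_one[of "1 / x"] x by (simp add: ln_div)
    then have "- (x * ln x) \<le> 1 - x" using x by (simp add: field_simps)
    moreover have "x * ln x \<le> 0" using x True by (simp add: mult_nonneg_nonpos)
    ultimately show ?thesis using x by simp
  qed simp
next
  case False
  then have "x * ln x \<le> c * ln c" using assms by (intro mult_mono) auto
  moreover have "0 \<le> x * ln x" using False by simp
  ultimately show ?thesis by simp
qed

lemma KL_div_density_le_ln:
  fixes Q :: "real measure" and g :: "real \<Rightarrow> real"
  assumes Q: "prob_space Q" and D: "prob_space (density Q g)"
    and g_meas: "g \<in> borel_measurable Q" and g_nonneg: "\<And>x. 0 \<le> g x" and g_le: "\<And>x. g x \<le> c"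
  shows "KL_div (density Q g) Q \<le> ereal (ln c)"
proof -
  interpret Q: prob_space Q by (rule Q)
  interpret D: prob_space "density Q g" by (rule D)
  have sets: "sets (density Q g) = sets Q" by simp
  have ac: "absolutely_continuous Q (density Q g)"
    by (rule absolutely_continuousI_density) (use g_meas in simp)
  have "AE x in Q. ennreal (g x) = RN_deriv Q (density Q g) x"
    by (rule Q.RN_deriv_unique) (use g_meas in auto)
  then have "AE x in density Q g. ennreal (g x) = RN_deriv Q (density Q g) x"
    by (rule absolutely_continuous_AE[OF sets ac])
  then have entropy: "AE x in density Q g. entropy_density (exp 1) Q (density Q g) x = ln (g x)"
  proof eventually_elim
    case (elim x)
    then show ?case using g_nonneg[of x] by (simp add: entropy_density_def log_def flip: elim)
  qed
  have entropy_meas: "entropy_density (exp 1) Q (density Q g) \<in> borel_measurable (density Q g)"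
    by (subst measurable_cong_sets[OF sets refl]) (rule measurable_entropy_density)
  have ln_meas: "(\<lambda>x. ln (g x)) \<in> borel_measurable (density Q g)"
    using g_meas by simp
  have "integrable Q (\<lambda>x. g x * ln (g x))"
    by (rule Q.integrable_const_bound[where B = "1 + \<bar>c * ln c\<bar>"])
       (use g_meas abs_mult_ln_le[OF g_nonneg g_le] in auto)
  then have int: "integrable (density Q g) (\<lambda>x. ln (g x))"
    using g_meas g_nonneg by (subst integrable_density) auto
  have "0 < g x \<Longrightarrow> ln (g x) \<le> ln c" for x
    using g_le[of x] by simp
  then have "AE x in density Q g. ln (g x) \<le> ln c"
    using g_meas by (subst AE_density) auto
  then have "(\<integral>x. ln (g x) \<partial>density Q g) \<le> (\<integral>x. ln c \<partial>density Q g)"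
    by (intro integral_mono_AE int) auto
  moreover have "KL_divergence (exp 1) Q (density Q g) = (\<integral>x. ln (g x) \<partial>density Q g)"
    unfolding KL_divergence_def by (rule integral_cong_AE[OF entropy_meas ln_meas entropy])
  moreover have "integrable (density Q g) (entropy_density (exp 1) Q (density Q g))"
    using integrable_cong_AE[OF entropy_meas ln_meas entropy] int by simp
  ultimately show ?thesis
    unfolding KL_div_def using sets ac D.prob_space by simp
qed

locale cdf_with_positive_density =
  fixes F f :: "real \<Rightarrow> real"
  assumes has_derivative: "\<And>x. (F has_real_derivative f x) (at x)"
    and density_pos: "\<And>x. 0 < f x"
    and density_measurable: "f \<in> borel_measurable borel"
    and tendsto_at_bot: "(F \<longlongrightarrow> 0) at_bot"
    and tendsto_at_top: "(F \<longlongrightarrow> 1) at_top"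
begin

lemma strict_mono_F: "strict_mono F"
  using DERIV_pos_imp_increasing has_derivative density_pos by (intro strict_monoI) blast

lemma F_pos: "0 < F x"
proof -
  have "eventually (\<lambda>y. F y \<le> F (x - 1)) at_bot"
    using strict_mono_F by (auto simp: eventually_at_bot_linorder strict_mono_less_eq)
  then have "0 \<le> F (x - 1)"
    by (rule tendsto_upperbound[OF tendsto_at_bot]) simp
  also have "\<dots> < F x" using strict_mono_F by (simp add: strict_mono_less)
  finally show ?thesis .
qed

lemma F_less_1: "F x < 1"
proof -
  have "eventually (\<lambda>y. F (x + 1) \<le> F y) at_top"
    using strict_mono_F by (auto simp: eventually_at_top_linorder strict_mono_less_eq)
  then have "F (x + 1) \<le> 1"
    by (rule tendsto_lowerbound[OF tendsto_at_top]) simp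
  moreover have "F x < F (x + 1)" using strict_mono_F by (simp add: strict_mono_less)
  ultimately show ?thesis by simp
qed

lemma surj_onto_unit_interval:
  assumes "0 < u" "u < 1"
  obtains x where "F x = u"
  using tendsto_0_1_IVT[OF _ tendsto_at_bot tendsto_at_top assms] has_derivative
  by (metis DERIV_isCont)

lemma emeasure_density_atMost: "emeasure (density lborel f) {..a} = ennreal (F a)"
proof -
  \<comment> \<open>reflect \<open>x \<mapsto> -x\<close> to apply the fundamental theorem of calculus on \<open>[-a, \<infinity>)\<close>\<close>
  have "emeasure (density lborel f) {..a} = (\<integral>\<^sup>+x. ennreal (f x) * indicator {..a} x \<partial>lborel)"
    using density_measurable by (simp add: emeasure_density)
  also have "\<dots> = (\<integral>\<^sup>+x. ennreal (f (- x)) * indicator {- a..} x \<partial>lborel)"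
    using nn_integral_real_affine[of "\<lambda>x. ennreal (f x) * indicator {..a} x" "-1" 0]
      density_measurable
    by (simp, intro nn_integral_cong) (auto split: split_indicator)
  also have "\<dots> = ennreal (0 - (- F (- (- a))))"
  proof (rule nn_integral_FTC_atLeast)
    show "(\<lambda>x. f (- x)) \<in> borel_measurable borel" using density_measurable by measurable
    show "((\<lambda>x. - F (- x)) has_real_derivative f (- x)) (at x)" for x
      using DERIV_chain2[OF has_derivative, of uminus "-1" x]
      by (auto intro!: derivative_eq_intros simp: DERIV_minus)
    show "0 \<le> f (- x)" for x using density_pos[of "- x"] by simp
    show "((\<lambda>x. - F (- x)) \<longlongrightarrow> 0) at_top"
      using tendsto_minus[OF filterlim_compose[OF tendsto_at_bot filterlim_uminus_at_bot_at_top]]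
      by simp
  qed
  finally show ?thesis by simp
qed

lemma prob_space_density: "prob_space (density lborel f)"
proof (rule prob_spaceI)
  let ?M = "density lborel f"
  have "(\<lambda>n. emeasure ?M {..real n}) \<longlonglongrightarrow> emeasure ?M (\<Union>n. {..real n})"
    by (intro Lim_emeasure_incseq) (auto simp: incseq_def)
  moreover have "(\<lambda>n. emeasure ?M {..real n}) \<longlonglongrightarrow> ennreal 1"
    unfolding emeasure_density_atMost
    by (intro tendsto_ennrealI filterlim_compose[OF tendsto_at_top filterlim_real_sequentially])
  moreover have "(\<Union>n. {..real n}) = UNIV"
    by (auto intro: real_arch_simple)
  ultimately show "emeasure ?M (space ?M) = 1" using LIMSEQ_unique by fastforce
qed

lemma measure_density_atMost: "measure (density lborel f) {..a} = F a"
  using emeasure_density_atMost[of a] F_pos[of a] by (simp add: measure_def)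

definition gaussianize :: "real \<Rightarrow> real" where
  "gaussianize x = Phi_inv (F x)"

lemma gaussianize_le_iff: "gaussianize x \<le> y \<longleftrightarrow> F x \<le> Phi y"
  unfolding gaussianize_def using F_pos F_less_1 by (rule Phi_inv_le_iff)

lemma gaussianize_eq_iff: "gaussianize x = y \<longleftrightarrow> F x = Phi y"
  unfolding gaussianize_def using Phi_Phi_inv[OF F_pos F_less_1] by auto

lemma strict_mono_gaussianize: "strict_mono gaussianize"
proof
  fix x y :: real assume "x < y"
  then have "F x < F y" by (rule strict_monoD[OF strict_mono_F])
  then show "gaussianize x < gaussianize y"
    using gaussianize_le_iff[of y "gaussianize x"] Phi_Phi_inv[OF F_pos F_less_1, of x]
    by (auto simp: not_le gaussianize_def)
qed

lemma surj_gaussianize: "surj gaussianize"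
proof -
  have "y \<in> range gaussianize" for y
    using surj_onto_unit_interval[OF Phi_pos Phi_less_1] gaussianize_eq_iff by (metis rangeI)
  then show ?thesis by blast
qed

lemma gaussianize_measurable: "gaussianize \<in> borel_measurable borel"
  by (rule borel_measurable_mono) (use strict_mono_gaussianize in \<open>simp add: strict_mono_mono\<close>)

lemma inv_gaussianize_measurable: "inv gaussianize \<in> borel_measurable borel"
proof (rule borel_measurable_mono, rule monoI)
  fix a b :: real assume "a \<le> b"
  then show "inv gaussianize a \<le> inv gaussianize b"
    using surj_f_inv_f[OF surj_gaussianize] strict_mono_gaussianize
    by (metis not_le strict_mono_less)
qed

lemma distr_gaussianize: "distr (density lborel f) lborel gaussianize = std_normal"
proof -
  interpret M: prob_space "density lborel f" by (rule prob_space_density)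
  have meas: "gaussianize \<in> measurable (density lborel f) borel"
    using gaussianize_measurable by simp
  have "cdf (distr (density lborel f) borel gaussianize) y = cdf std_normal y" for y
  proof -
    obtain a where a: "F a = Phi y"
      using surj_onto_unit_interval[OF Phi_pos Phi_less_1] .
    have "gaussianize -` {..y} \<inter> space (density lborel f) = {..a}"
      using gaussianize_le_iff a[symmetric] strict_mono_less_eq[OF strict_mono_F] by auto
    then have "cdf (distr (density lborel f) borel gaussianize) y = measure (density lborel f) {..a}"
      using meas by (simp add: cdf_def measure_distr)
    then show ?thesis using a by (simp add: measure_density_atMost Phi_eq_cdf)
  qed
  then have "distr (density lborel f) borel gaussianize = std_normal"
    by (intro cdf_unique M.real_distribution_distr meas real_distribution_std_normal) auto
  moreover have "distr (density lborel f) lborel gaussianize = distr (density lborel f) borel gaussianize"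
    by (rule distr_cong) auto
  ultimately show ?thesis by simp
qed

text \<open>Since \<open>gaussianize\<close> is a bijection pushing \<open>f\<close> to the standard normal, the divergence
  of the pushforward of \<open>p\<close> from the normal is that of \<open>p\<close> from \<open>f\<close>.\<close>
lemma KL_div_distr_gaussianize_le:
  fixes p :: "real \<Rightarrow> real"
  assumes prob: "prob_space (density lborel p)" and p_meas: "p \<in> borel_measurable borel"
    and p_nonneg: "\<And>x. 0 \<le> p x" and p_le: "\<And>x. p x \<le> c * f x"
  shows "KL_div (distr (density lborel p) lborel gaussianize) std_normal \<le> ereal (ln c)"
proof -
  define h :: "real \<Rightarrow> real" where "h x = p x / f x" for x
  define g where "g y = h (inv gaussianize y)" for y
  have h_meas: "h \<in> borel_measurable borel"
    unfolding h_def using p_meas density_measurable by measurable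
  have g_meas: "g \<in> borel_measurable borel"
    unfolding g_def using measurable_comp[OF inv_gaussianize_measurable h_meas] by (simp add: o_def)
  have g_gaussianize: "g (gaussianize x) = h x" for x
    unfolding g_def using strict_mono_gaussianize by (simp add: strict_mono_imp_inj_on)
  have "density lborel p = density (density lborel f) h"
  proof -
    have "ennreal (f x) * ennreal (h x) = ennreal (p x)" for x
      using density_pos[of x] p_nonneg[of x] by (simp add: h_def flip: ennreal_mult)
    then show ?thesis
      using density_measurable h_meas by (simp add: density_density_eq)
  qed
  also have "distr \<dots> lborel gaussianize = density std_normal g"
    using density_distr[of g lborel gaussianize "density lborel f"] g_meas gaussianize_measurable
    by (simp add: g_gaussianize distr_gaussianize)
  finally have distr_eq: "distr (density lborel p) lborel gaussianize = density std_normal g" .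
  show ?thesis
    unfolding distr_eq
  proof (rule KL_div_density_le_ln)
    show "prob_space std_normal" by (rule std_normal.prob_space_axioms)
    show "prob_space (density std_normal g)"
      unfolding distr_eq[symmetric] using gaussianize_measurable
      by (intro prob_space.prob_space_distr prob) simp
    show "g \<in> borel_measurable std_normal" using g_meas by simp
    show "0 \<le> g y" "g y \<le> c" for y
      using p_nonneg p_le density_pos[of "inv gaussianize y"]
      by (simp_all add: g_def h_def divide_le_eq)
  qed
qed

end

lemma exp_neg_div_div_le:
  fixes r s :: real
  assumes "0 < r" "0 < s"
  shows "exp (- (r / s)) / s \<le> 2 * s / r\<^sup>2"
proof -
  have "(r / s)\<^sup>2 / 2 \<le> exp (r / s)"
    using exp_lower_Taylor_quadratic[of "r / s"] divide_pos_pos[OF assms] by linarith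
  then have "r\<^sup>2 \<le> 2 * s\<^sup>2 * exp (r / s)"
    using assms by (simp add: field_simps power_divide)
  then have "r\<^sup>2 * (exp (- (r / s)) / s) \<le> 2 * s\<^sup>2 * exp (r / s) * (exp (- (r / s)) / s)"
    using assms by (intro mult_right_mono) auto
  also have "\<dots> = 2 * s"
    using assms by (simp add: exp_minus field_simps power2_eq_square)
  finally show ?thesis
    using assms by (simp add: pos_le_divide_eq mult.commute)
qed

lemma sigmoid_increment_le_grid_sum:
  assumes s: "0 < s" and h: "0 < h"
  shows "sigmoid ((x - a0) / s) - sigmoid ((x - (a0 + real J * h)) / s) - real J * h\<^sup>2 / (4 * s\<^sup>2)
         \<le> (\<Sum>j<J. h * logistic_kernel s (x - (a0 + real j * h)))"
proof -
  define G where "G j = - sigmoid ((x - (a0 + real j * h)) / s)" for j :: nat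
  have step: "G (Suc j) - G j \<le> h * logistic_kernel s (x - (a0 + real j * h)) + h\<^sup>2 / (4 * s\<^sup>2)"
    for j
  proof -
    define u where "u = (x - (a0 + real j * h)) / s"
    have "(x - (a0 + real (Suc j) * h)) / s = u - h / s"
      unfolding u_def using s by (simp add: field_simps)
    then have "G (Suc j) - G j = sigmoid u - sigmoid (u - h / s)"
      unfolding G_def u_def by simp
    also have "\<dots> \<le> h / s * logistic_density u + (h / s)\<^sup>2 / 4"
      using sigmoid_diff_le[of "h / s" u] s h by simp
    finally show ?thesis
      unfolding u_def logistic_kernel_def by (simp add: power_divide mult.commute)
  qed
  have "G J - G 0 = (\<Sum>j<J. G (Suc j) - G j)" by (rule sum_lessThan_telescope[symmetric])
  also have "\<dots> \<le> (\<Sum>j<J. h * logistic_kernel s (x - (a0 + real j * h)) + h\<^sup>2 / (4 * s\<^sup>2))"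
    by (intro sum_mono step)
  finally show ?thesis unfolding G_def by (simp add: sum.distrib)
qed

lemma grid_kernel_mass_ge:
  assumes s: "0 < s" and h: "0 < h" and "a0 + 1 \<le> x" "x + 1 \<le> a0 + real J * h"
  shows "1 - 4 * s\<^sup>2 - real J * h\<^sup>2 / (4 * s\<^sup>2)
         \<le> (\<Sum>j<J. h * logistic_kernel s (x - (a0 + real j * h)))"
proof -
  have tail: "exp (- (1 / s)) \<le> 2 * s\<^sup>2"
    using exp_neg_div_div_le[of 1 s] s by (simp add: field_simps power2_eq_square)
  have "1 / s \<le> (x - a0) / s" using assms by (intro divide_right_mono) auto
  then have "1 - 2 * s\<^sup>2 \<le> sigmoid ((x - a0) / s)"
    using one_minus_sigmoid_le_exp[of "(x - a0) / s"] tail by (smt (verit) exp_le_cancel_iff)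
  moreover have "(x - (a0 + real J * h)) / s \<le> - (1 / s)"
    using assms by (simp add: divide_simps)
  then have "sigmoid ((x - (a0 + real J * h)) / s) \<le> 2 * s\<^sup>2"
    using sigmoid_le_exp[of "(x - (a0 + real J * h)) / s"] tail by (smt (verit) exp_le_cancel_iff)
  ultimately show ?thesis using sigmoid_increment_le_grid_sum[OF s h, of x a0 J] by linarith
qed

text \<open>The grid kernel mass falls short of one by at most \<open>4 s\<^sup>2 + J h\<^sup>2 / (4 s\<^sup>2)\<close>, and grid
  points farther than \<open>r\<close> from \<open>x\<close>, where \<open>w\<close> may be small, only see the kernel tail.\<close>
lemma grid_convolution_ge:
  fixes w :: "nat \<Rightarrow> real"
  assumes s: "0 < s" and h: "0 < h" and x: "a0 + 1 \<le> x" "x + 1 \<le> a0 + real J * h"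
    and y: "0 \<le> y" "y \<le> M" and w_nonneg: "\<And>j. j < J \<Longrightarrow> 0 \<le> w j"
    and w_near: "\<And>j. j < J \<Longrightarrow> \<bar>x - (a0 + real j * h)\<bar> < r \<Longrightarrow> y \<le> w j"
  shows "y - (4 * s\<^sup>2 + real J * h\<^sup>2 / (4 * s\<^sup>2)) * M - real J * h * M * (exp (- (r / s)) / s)
         \<le> (\<Sum>j<J. h * w j * logistic_kernel s (x - (a0 + real j * h)))"
proof -
  define K where "K j = logistic_kernel s (x - (a0 + real j * h))" for j
  define E where "E = exp (- (r / s)) / s"
  have near_or_far: "h * y * K j - h * M * E \<le> h * w j * K j" if j: "j < J" for j
  proof (cases "\<bar>x - (a0 + real j * h)\<bar> < r")
    case True
    then have "h * y * K j \<le> h * w j * K j"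
      using w_near[OF j] h logistic_kernel_nonneg[OF s]
      by (intro mult_right_mono mult_left_mono) (auto simp: K_def)
    moreover have "0 \<le> h * M * E" using h y s by (simp add: E_def)
    ultimately show ?thesis by linarith
  next
    case False
    have "h * y * K j \<le> h * M * E"
      using logistic_kernel_tail_le[OF s, of r] False y h logistic_kernel_nonneg[OF s]
      by (intro mult_mono mult_left_mono) (auto simp: K_def E_def)
    moreover have "0 \<le> h * w j * K j"
      using h w_nonneg[OF j] logistic_kernel_nonneg[OF s] by (simp add: K_def)
    ultimately show ?thesis by linarith
  qed
  have "y * (1 - 4 * s\<^sup>2 - real J * h\<^sup>2 / (4 * s\<^sup>2)) \<le> y * (\<Sum>j<J. h * K j)"
    using grid_kernel_mass_ge[OF s h x] y unfolding K_def by (intro mult_left_mono) auto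
  also have "\<dots> - real J * h * M * E = (\<Sum>j<J. h * y * K j - h * M * E)"
    by (simp add: sum_subtractf sum_distrib_left algebra_simps)
  also have "\<dots> \<le> (\<Sum>j<J. h * w j * K j)" by (intro sum_mono near_or_far) simp
  finally have "y * (1 - 4 * s\<^sup>2 - real J * h\<^sup>2 / (4 * s\<^sup>2)) - real J * h * M * E
      \<le> (\<Sum>j<J. h * w j * K j)" by simp
  moreover have "y * (4 * s\<^sup>2 + real J * h\<^sup>2 / (4 * s\<^sup>2))
      \<le> M * (4 * s\<^sup>2 + real J * h\<^sup>2 / (4 * s\<^sup>2))"
    using y by (intro mult_right_mono) auto
  then have "y - (4 * s\<^sup>2 + real J * h\<^sup>2 / (4 * s\<^sup>2)) * M
      \<le> y * (1 - 4 * s\<^sup>2 - real J * h\<^sup>2 / (4 * s\<^sup>2))"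
    by (simp add: algebra_simps)
  ultimately show ?thesis unfolding K_def E_def by linarith
qed

lemma sum_step_le_integral:
  fixes c :: "nat \<Rightarrow> real" and B :: "real \<Rightarrow> real"
  assumes h: "0 < h"
    and c_le: "\<And>j z. j < J \<Longrightarrow> a0 + real j * h \<le> z \<Longrightarrow> z < a0 + real (Suc j) * h \<Longrightarrow> c j \<le> B z"
    and B_nonneg: "\<And>z. 0 \<le> B z" and B_int: "integrable lborel B"
  shows "(\<Sum>j<J. h * c j) \<le> (\<integral>z. B z \<partial>lborel)"
proof -
  define C where "C j = {a0 + real j * h ..< a0 + real (Suc j) * h}" for j
  define step where "step z = (\<Sum>j<J. c j * indicator (C j) z)" for z
  have "has_bochner_integral lborel (\<lambda>z. c j * indicator (C j) z) (c j * h)" for j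
  proof -
    have "has_bochner_integral lborel (indicator (C j)) (measure lborel (C j))"
      using h by (intro has_bochner_integral_real_indicator) (auto simp: C_def)
    moreover have "measure lborel (C j) = h" using h by (simp add: C_def algebra_simps)
    ultimately show ?thesis by (intro has_bochner_integral_mult_right) simp
  qed
  then have "has_bochner_integral lborel step (\<Sum>j<J. c j * h)"
    unfolding step_def by (rule has_bochner_integral_sum)
  then have step_int: "integrable lborel step" "(\<integral>z. step z \<partial>lborel) = (\<Sum>j<J. h * c j)"
    by (auto simp: has_bochner_integral_iff mult.commute)
  have disjoint: "j = l" if "z \<in> C j" "z \<in> C l" for z j l
  proof (rule ccontr)
    assume "j \<noteq> l"
    then consider "Suc j \<le> l" | "Suc l \<le> j" by linarith
    then show False
    proof cases
      case 1
      then have "real (Suc j) * h \<le> real l * h" using h by (intro mult_right_mono) auto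
      then show False using that unfolding C_def by auto
    next
      case 2
      then have "real (Suc l) * h \<le> real j * h" using h by (intro mult_right_mono) auto
      then show False using that unfolding C_def by auto
    qed
  qed
  have "step z \<le> B z" for z
  proof (cases "\<exists>j<J. z \<in> C j")
    case True
    then obtain j where j: "j < J" "z \<in> C j" by blast
    have "step z = (\<Sum>l\<in>{j}. c l * indicator (C l) z)"
      unfolding step_def
      by (rule sum.mono_neutral_right) (use j disjoint in \<open>auto split: split_indicator\<close>)
    also have "\<dots> = c j" using j by simp
    finally show ?thesis using c_le[of j z] j by (simp add: C_def)
  next
    case False
    then have "step z = 0" unfolding step_def by (intro sum.neutral) auto
    then show ?thesis using B_nonneg by simp
  qed
  then have "(\<integral>z. step z \<partial>lborel) \<le> (\<integral>z. B z \<partial>lborel)"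
    by (intro integral_mono step_int(1) B_int)
  then show ?thesis using step_int(2) by simp
qed

lemma left_riemann_sum_le_integral:
  fixes q :: "real \<Rightarrow> real"
  assumes h: "0 < h" and q_int: "integrable lborel q" and q_nonneg: "\<And>z. 0 \<le> q z"
    and \<tau>: "0 \<le> \<tau>"
    and osc: "\<And>z w. z \<in> {a0..a0 + real J * h} \<Longrightarrow> w \<in> {a0..a0 + real J * h} \<Longrightarrow>
      \<bar>z - w\<bar> < h \<Longrightarrow> q z \<le> q w + \<tau>"
  shows "(\<Sum>j<J. h * q (a0 + real j * h)) \<le> (\<integral>z. q z \<partial>lborel) + \<tau> * (real J * h)"
proof -
  define I where "I = {a0..a0 + real J * h}"
  have I_int: "integrable lborel (\<lambda>z. \<tau> * indicator I z :: real)"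
    unfolding I_def by (intro integrable_mult_right integrable_real_indicator) (auto simp: emeasure_lborel_Icc_eq)
  have "(\<Sum>j<J. h * q (a0 + real j * h)) \<le> (\<integral>z. q z + \<tau> * indicator I z \<partial>lborel)"
  proof (rule sum_step_le_integral[OF h])
    fix j z assume j: "j < J" and z: "a0 + real j * h \<le> z" "z < a0 + real (Suc j) * h"
    have "real (Suc j) * h \<le> real J * h" "0 \<le> real j * h"
      using j h by (auto intro: mult_right_mono)
    then have "a0 + real j * h \<in> I" "z \<in> I"
      using z unfolding I_def atLeastAtMost_iff by linarith+
    moreover have "\<bar>a0 + real j * h - z\<bar> < h" using z by (auto simp: algebra_simps)
    ultimately show "q (a0 + real j * h) \<le> q z + \<tau> * indicator I z"
      using osc unfolding I_def by auto
  qed (use q_nonneg \<tau> q_int I_int in auto)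
  also have "\<dots> = (\<integral>z. q z \<partial>lborel) + \<tau> * (real J * h)"
    using q_int I_int h by (simp add: I_def)
  finally show ?thesis .
qed

lemma sum_translates_by_multiplicity:
  fixes k :: "nat \<Rightarrow> nat" and a :: "nat \<Rightarrow> real" and L :: "real \<Rightarrow> real"
  shows "\<exists>\<mu>. \<forall>x. (\<Sum>i=1..(\<Sum>j<J. k j). L (x - \<mu> i)) = (\<Sum>j<J. real (k j) * L (x - a j))"
proof (induction J)
  case (Suc J)
  then obtain \<mu> where IH: "\<forall>x. (\<Sum>i=1..(\<Sum>j<J. k j). L (x - \<mu> i)) = (\<Sum>j<J. real (k j) * L (x - a j))"
    by blast
  define K where "K = (\<Sum>j<J. k j)"
  define \<mu>' where "\<mu>' i = (if i \<le> K then \<mu> i else a J)" for i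
  have "(\<Sum>i=1..K + k J. L (x - \<mu>' i)) = (\<Sum>i=1..K. L (x - \<mu> i)) + real (k J) * L (x - a J)" for x
  proof -
    have split: "{1..K + k J} = {1..K} \<union> {K<..K + k J}" by auto
    have "(\<Sum>i=1..K + k J. L (x - \<mu>' i))
        = (\<Sum>i=1..K. L (x - \<mu>' i)) + (\<Sum>i\<in>{K<..K + k J}. L (x - \<mu>' i))"
      unfolding split by (rule sum.union_disjoint) auto
    also have "\<dots> = (\<Sum>i=1..K. L (x - \<mu> i)) + (\<Sum>i\<in>{K<..K + k J}. L (x - a J))"
      by (intro arg_cong2[where f = "(+)"] sum.cong) (auto simp: \<mu>'_def)
    finally show ?thesis by simp
  qed
  then show ?case using IH unfolding K_def by (intro exI[of _ \<mu>']) simp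
qed simp

text \<open>Rounding the weights \<open>v\<close> down to multiples of \<open>1 / N\<close> realises them by \<open>N\<close> equally weighted
  components, at a uniform cost of at most one kernel height per grid point.\<close>
lemma logistic_mixture_rounding:
  fixes v a :: "nat \<Rightarrow> real"
  assumes N: "N \<ge> 1" and s: "0 < s" and v_nonneg: "\<And>j. j < J \<Longrightarrow> 0 \<le> v j"
    and v_sum: "(\<Sum>j<J. v j) \<le> 1"
  shows "\<exists>\<mu> \<sigma>. (\<forall>i\<in>{1..N}. 0 < \<sigma> i) \<and> (\<forall>x.
    (\<Sum>j<J. v j * logistic_kernel s (x - a j)) - real J / (4 * s * real N)
      \<le> logistic_mixture_density N \<mu> \<sigma> x)"
proof -
  define k where "k j = nat \<lfloor>real N * v j\<rfloor>" for j
  have k_le: "real (k j) \<le> real N * v j" if "j < J" for j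
    using v_nonneg[OF that] by (simp add: k_def)
  have k_ge: "real N * v j - 1 \<le> real (k j)" if "j < J" for j
    using v_nonneg[OF that] unfolding k_def by linarith
  have "(\<Sum>j<J. real (k j)) \<le> (\<Sum>j<J. real N * v j)"
    using k_le by (intro sum_mono) auto
  then have "real (\<Sum>j<J. k j) \<le> real N * (\<Sum>j<J. v j)"
    by (simp add: sum_distrib_left)
  also have "\<dots> \<le> real N" using v_sum N by (simp add: mult_left_le)
  finally have k_sum: "(\<Sum>j<J. k j) \<le> N" by (metis of_nat_le_iff of_nat_sum)
  obtain \<mu> where \<mu>: "\<And>x. (\<Sum>i=1..(\<Sum>j<J. k j). logistic_kernel s (x - \<mu> i))
      = (\<Sum>j<J. real (k j) * logistic_kernel s (x - a j))"
    using sum_translates_by_multiplicity[of "logistic_kernel s" k J a] by blast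
  have "(\<Sum>j<J. v j * logistic_kernel s (x - a j)) - real J / (4 * s * real N)
      \<le> logistic_mixture_density N \<mu> (\<lambda>_. s) x" for x
  proof -
    have "(\<Sum>j<J. 1 / real N * logistic_kernel s (x - a j)) \<le> (\<Sum>j<J. 1 / real N * (1 / (4 * s)))"
      using logistic_kernel_le[OF s] by (intro sum_mono mult_left_mono) auto
    then have "(\<Sum>j<J. v j * logistic_kernel s (x - a j)) - real J / (4 * s * real N)
        \<le> (\<Sum>j<J. v j * logistic_kernel s (x - a j) - 1 / real N * logistic_kernel s (x - a j))"
      by (simp add: sum_subtractf mult.commute)
    also have "\<dots> \<le> (\<Sum>j<J. 1 / real N * (real (k j) * logistic_kernel s (x - a j)))"
    proof (intro sum_mono)
      fix j assume "j \<in> {..<J}"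
      then have "(real N * v j - 1) * logistic_kernel s (x - a j)
          \<le> real (k j) * logistic_kernel s (x - a j)"
        using k_ge logistic_kernel_nonneg[OF s] by (intro mult_right_mono) auto
      then have "(real N * v j - 1) * logistic_kernel s (x - a j) / real N
          \<le> real (k j) * logistic_kernel s (x - a j) / real N"
        by (rule divide_right_mono) simp
      then show "v j * logistic_kernel s (x - a j) - 1 / real N * logistic_kernel s (x - a j)
          \<le> 1 / real N * (real (k j) * logistic_kernel s (x - a j))"
        using N by (simp add: field_simps)
    qed
    also have "\<dots> = 1 / real N * (\<Sum>i=1..(\<Sum>j<J. k j). logistic_kernel s (x - \<mu> i))"
      by (simp only: \<mu> sum_distrib_left)
    also have "\<dots> \<le> logistic_mixture_density N \<mu> (\<lambda>_. s) x"
      unfolding logistic_mixture_density_def using k_sum logistic_kernel_nonneg[OF s]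
      by (intro mult_left_mono sum_mono2) auto
    finally show ?thesis .
  qed
  then show ?thesis using s by (intro exI[of _ \<mu>] exI[of _ "\<lambda>_. s"]) auto
qed

text \<open>Extend \<open>p\<close> continuously past \<open>S\<close> (Tietze), cut it off outside an open \<open>U \<supseteq> S\<close> of
  barely larger measure (outer regularity and Urysohn).\<close>
lemma continuous_extension_small_excess:
  fixes S :: "real set" and p :: "real \<Rightarrow> real"
  assumes S: "compact S" and p_cont: "continuous_on S p" and p_nonneg: "\<And>x. x \<in> S \<Longrightarrow> 0 \<le> p x"
    and p_int: "integrable lborel (\<lambda>x. indicator S x * p x)" and \<eta>: "0 < \<eta>"
  obtains q where "continuous_on UNIV q" "\<And>z. 0 \<le> q z" "\<And>x. x \<in> S \<Longrightarrow> q x = p x"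
    "integrable lborel q" "(\<integral>z. q z \<partial>lborel) \<le> (\<integral>x. indicator S x * p x \<partial>lborel) + \<eta>"
proof -
  obtain M where M: "0 < M" "\<And>x. x \<in> S \<Longrightarrow> \<bar>p x\<bar> \<le> M"
    using compact_imp_bounded[OF compact_continuous_image[OF p_cont S]] by (auto simp: bounded_pos)
  have S_closed: "closed S" using S by (rule compact_imp_closed)
  then obtain U where U: "open U" "S \<subseteq> U" "emeasure lborel (U - S) < ennreal (\<eta> / M)"
    using outer_regular_lborel[of S "\<eta> / M"] \<eta> M by auto
  then have U_fin: "emeasure lborel (U - S) < \<top>" using order.strict_trans ennreal_less_top by blast
  then have U_measure: "M * measure lborel (U - S) \<le> \<eta>"
    using U(3) M by (simp add: emeasure_eq_ennreal_measure ennreal_less_iff field_simps)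
  obtain \<psi> :: "real \<Rightarrow> real" where \<psi>: "continuous_on UNIV \<psi>" "\<And>x. \<psi> x \<in> closed_segment 1 0"
    "\<And>x. x \<in> S \<Longrightarrow> \<psi> x = 1" "\<And>x. x \<in> - U \<Longrightarrow> \<psi> x = 0"
    using Urysohn[OF S_closed _ , of "- U" 1 0] U by auto
  obtain pe where pe: "continuous_on UNIV pe" "\<And>x. x \<in> S \<Longrightarrow> pe x = p x" "\<And>x. norm (pe x) \<le> M"
    using Tietze[OF p_cont, of UNIV M] M S_closed by auto
  define q where "q z = max 0 (pe z) * \<psi> z" for z
  have \<psi>_01: "0 \<le> \<psi> z" "\<psi> z \<le> 1" for z
    using \<psi>(2)[of z] by (auto simp: closed_segment_eq_real_ivl)
  have q_cont: "continuous_on UNIV q" unfolding q_def by (intro continuous_intros pe \<psi>)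
  have q_nonneg: "0 \<le> q z" for z unfolding q_def using \<psi>_01 by simp
  have q_eq: "q x = p x" if "x \<in> S" for x using that pe \<psi> p_nonneg unfolding q_def by simp
  define B where "B z = indicator S z * p z + M * indicator (U - S) z" for z
  have q_le: "q z \<le> B z" for z
  proof -
    consider "z \<in> S" | "z \<in> U - S" | "z \<notin> U" by blast
    then show ?thesis
    proof cases
      case 2
      have "max 0 (pe z) * \<psi> z \<le> M * 1"
        using pe(3)[of z] \<psi>_01[of z] M by (intro mult_mono) auto
      then show ?thesis using 2 by (simp add: q_def B_def)
    next
      case 3
      then have "z \<notin> S" using U(2) by blast
      then show ?thesis using 3 \<psi>(4) M by (simp add: q_def B_def)
    qed (use q_eq in \<open>simp add: B_def\<close>)
  qed
  have B_int: "integrable lborel B"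
    unfolding B_def using p_int U_fin U S_closed
    by (intro Bochner_Integration.integrable_add integrable_mult_right integrable_real_indicator) auto
  have q_int: "integrable lborel q"
  proof (rule Bochner_Integration.integrable_bound[OF B_int])
    show "q \<in> borel_measurable lborel"
      using borel_measurable_continuous_onI[OF q_cont] by simp
    show "AE z in lborel. norm (q z) \<le> norm (B z)"
      using q_le q_nonneg by (auto intro!: AE_I2 order_trans[OF _ abs_ge_self])
  qed
  have "(\<integral>z. q z \<partial>lborel) \<le> (\<integral>z. B z \<partial>lborel)"
    by (intro integral_mono q_int B_int q_le)
  also have "\<dots> = (\<integral>x. indicator S x * p x \<partial>lborel) + M * measure lborel (U - S)"
    unfolding B_def using p_int U_fin U S_closed by (simp add: Bochner_Integration.integral_add)
  finally show ?thesis using that q_cont q_nonneg q_eq q_int U_measure by force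
qed

lemma fine_uniform_grid:
  fixes L r B :: real
  assumes "0 < L" "0 < r" "0 < B"
  obtains J :: nat where "0 < J" "L / real J < r" "L\<^sup>2 / real J \<le> B"
proof
  define J where "J = nat \<lceil>max (L / r) (L\<^sup>2 / B)\<rceil> + 1"
  show "0 < J" by (simp add: J_def)
  have J: "L / r < real J" "L\<^sup>2 / B < real J" unfolding J_def by linarith+
  have "0 < real J" by (simp add: J_def)
  then show "L / real J < r" "L\<^sup>2 / real J \<le> B" using J assms by (simp_all add: field_simps)
qed

text \<open>The three error terms of \<open>grid_convolution_ge\<close> are made small by taking first the kernel
  scale \<open>s\<close> and then the grid step \<open>h = L / J\<close> small.\<close>
lemma smoothing_parameters:
  fixes L M r \<rho> :: real
  assumes L: "0 < L" and M: "0 < M" and r: "0 < r" and \<rho>: "0 < \<rho>"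
  obtains s h :: real and J :: nat where "0 < s" "0 < h" "h < r" "real J * h = L"
    "(4 * s\<^sup>2 + real J * h\<^sup>2 / (4 * s\<^sup>2)) * M + real J * h * M * (exp (- (r / s)) / s) \<le> 2 * \<rho> / 3"
proof -
  define s where "s = min 1 (min (\<rho> / (24 * M)) (\<rho> * r\<^sup>2 / (6 * L * M)))"
  have s: "0 < s" "s \<le> 1" "s \<le> \<rho> / (24 * M)" "s \<le> \<rho> * r\<^sup>2 / (6 * L * M)"
    using \<rho> r L M by (auto simp: s_def)
  obtain J where J: "0 < J" "L / real J < r" "L\<^sup>2 / real J \<le> 2 * \<rho> * s\<^sup>2 / (3 * M)"
    using fine_uniform_grid[of L r "2 * \<rho> * s\<^sup>2 / (3 * M)"] L r \<rho> s M by auto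
  define h where "h = L / real J"
  have h: "0 < h" "h < r" "real J * h = L" "real J * h\<^sup>2 = L\<^sup>2 / real J"
    using J L by (auto simp: h_def power2_eq_square)
  have "4 * s\<^sup>2 * M \<le> \<rho> / 6"
  proof -
    have "s\<^sup>2 \<le> s" using s by (simp add: power2_eq_square mult_left_le_one_le)
    then have "4 * s\<^sup>2 * M \<le> 4 * s * M" using M by (simp add: mult_right_mono)
    also have "\<dots> \<le> \<rho> / 6" using s(3) M by (simp add: field_simps)
    finally show ?thesis .
  qed
  moreover have "real J * h\<^sup>2 / (4 * s\<^sup>2) * M \<le> \<rho> / 6"
  proof -
    have "L\<^sup>2 / real J * M \<le> 2 * \<rho> * s\<^sup>2 / 3"
      using J(3) M by (simp add: le_divide_eq mult_ac)
    then have "L\<^sup>2 / real J * M / (4 * s\<^sup>2) \<le> 2 * \<rho> * s\<^sup>2 / 3 / (4 * s\<^sup>2)"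
      by (rule divide_right_mono) simp
    then show ?thesis using h(4) s(1) by (simp add: field_simps)
  qed
  moreover have "real J * h * M * (exp (- (r / s)) / s) \<le> \<rho> / 3"
  proof -
    have "real J * h * M * (exp (- (r / s)) / s) = L * M * (exp (- (r / s)) / s)"
      using h(3) by simp
    also have "\<dots> \<le> L * M * (2 * s / r\<^sup>2)"
      using exp_neg_div_div_le[OF r s(1)] L M by (intro mult_left_mono) auto
    also have "\<dots> \<le> \<rho> / 3" using s(4) r L M by (simp add: field_simps)
    finally show ?thesis .
  qed
  ultimately show ?thesis
    using that[OF s(1) h(1-3)] by (simp add: algebra_simps)
qed

lemma grid_smoothing_approx:
  fixes q :: "real \<Rightarrow> real"
  assumes q_cont: "continuous_on UNIV q" and q_nonneg: "\<And>z. 0 \<le> q z"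
    and q_int: "integrable lborel q" and R: "0 < R" and \<rho>: "0 < \<rho>"
  obtains h s :: real and J :: nat where "0 < h" "0 < s"
    "(\<Sum>j<J. h * q (- (R + 1) + real j * h)) \<le> (\<integral>z. q z \<partial>lborel) + \<rho>"
    "\<And>x. \<bar>x\<bar> \<le> R \<Longrightarrow> q x - \<rho> \<le>
      (\<Sum>j<J. h * q (- (R + 1) + real j * h) * logistic_kernel s (x - (- (R + 1) + real j * h)))"
proof -
  define R' where "R' = R + 1"
  have R': "0 < R'" using R by (simp add: R'_def)
  have "bounded (q ` {-R'..R'})"
    by (intro compact_imp_bounded compact_continuous_image continuous_on_subset[OF q_cont]) auto
  then obtain M where M: "0 < M" "\<And>z. z \<in> {-R'..R'} \<Longrightarrow> \<bar>q z\<bar> \<le> M"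
    unfolding bounded_pos by auto
  define \<tau> where "\<tau> = min (\<rho> / 3) (\<rho> / (2 * R'))"
  have \<tau>: "0 < \<tau>" "\<tau> \<le> \<rho> / 3" "\<tau> \<le> \<rho> / (2 * R')"
    using \<rho> R' by (auto simp: \<tau>_def)
  have "uniformly_continuous_on {-R'..R'} q"
    by (rule compact_uniformly_continuous[OF continuous_on_subset[OF q_cont] compact_Icc]) auto
  then obtain r where r: "0 < r" "\<And>z w. z \<in> {-R'..R'} \<Longrightarrow> w \<in> {-R'..R'} \<Longrightarrow> \<bar>z - w\<bar> < r \<Longrightarrow>
      \<bar>q z - q w\<bar> < \<tau>"
    using \<tau>(1) unfolding uniformly_continuous_on_def dist_real_def by blast
  obtain s h J where s: "0 < s" and h: "0 < h" "h < r" "real J * h = 2 * R'"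
    and error: "(4 * s\<^sup>2 + real J * h\<^sup>2 / (4 * s\<^sup>2)) * M + real J * h * M * (exp (- (r / s)) / s)
      \<le> 2 * \<rho> / 3"
    using smoothing_parameters[of "2 * R'" M r \<rho>] R' M(1) r(1) \<rho> by auto
  define a where "a j = - R' + real j * h" for j :: nat
  have a_mem: "a j \<in> {-R'..R'}" if "j < J" for j
  proof -
    have "real j * h \<le> real J * h" using that h by (intro mult_right_mono) auto
    then show ?thesis using h by (simp add: a_def)
  qed
  have "(\<Sum>j<J. h * q (a j)) \<le> (\<integral>z. q z \<partial>lborel) + \<tau> * (real J * h)"
    unfolding a_def
  proof (rule left_riemann_sum_le_integral[OF h(1) q_int q_nonneg])
    fix z w assume "z \<in> {- R'..- R' + real J * h}" "w \<in> {- R'..- R' + real J * h}" "\<bar>z - w\<bar> < h"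
    then have "\<bar>q z - q w\<bar> < \<tau>" using r(2) h(2,3) by auto
    then show "q z \<le> q w + \<tau>" by linarith
  qed (use \<tau> in simp)
  then have riemann: "(\<Sum>j<J. h * q (a j)) \<le> (\<integral>z. q z \<partial>lborel) + \<rho>"
    using \<tau>(3) h(3) R' by (simp add: field_simps)
  have "q x - \<rho> \<le> (\<Sum>j<J. h * q (a j) * logistic_kernel s (x - a j))" if x: "\<bar>x\<bar> \<le> R" for x
  proof -
    define y where "y = max 0 (q x - \<tau>)"
    have x_mem: "x \<in> {-R'..R'}" using x by (auto simp: R'_def)
    have "y - (4 * s\<^sup>2 + real J * h\<^sup>2 / (4 * s\<^sup>2)) * M - real J * h * M * (exp (- (r / s)) / s)
        \<le> (\<Sum>j<J. h * q (a j) * logistic_kernel s (x - a j))"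
      unfolding a_def
    proof (rule grid_convolution_ge[OF s h(1)])
      show "- R' + 1 \<le> x" "x + 1 \<le> - R' + real J * h" using x h by (auto simp: R'_def)
      show "0 \<le> y" "y \<le> M" using M(1) M(2)[OF x_mem] \<tau>(1) by (auto simp: y_def)
      show "y \<le> q (- R' + real j * h)" if "j < J" "\<bar>x - (- R' + real j * h)\<bar> < r" for j
        using r(2)[OF x_mem a_mem[OF that(1)]] that q_nonneg by (auto simp: y_def a_def)
    qed (use q_nonneg in auto)
    moreover have "q x - \<tau> \<le> y" by (simp add: y_def)
    ultimately show ?thesis using error \<tau>(2) by linarith
  qed
  with h(1) s riemann show ?thesis using that unfolding a_def R'_def by blast
qed

lemma weighted_logistic_mixture_dominates:
  fixes S :: "real set" and p :: "real \<Rightarrow> real"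
  assumes S: "compact S" and p_cont: "continuous_on S p"
    and p_int: "integrable lborel (\<lambda>x. indicator S x * p x)"
    and p_total: "(\<integral>x. indicator S x * p x \<partial>lborel) = 1"
    and \<delta>: "0 < \<delta>" and p_ge: "\<And>x. x \<in> S \<Longrightarrow> \<delta> \<le> p x" and \<eta>: "0 < \<eta>"
  shows "\<exists>J a v s. 0 < s \<and> (\<forall>j. 0 \<le> v j) \<and> (\<Sum>j<J. v j) \<le> 1 \<and>
    (\<forall>x\<in>S. (1 - 2 * \<eta>) * p x \<le> (\<Sum>j<J. v j * logistic_kernel s (x - a (j::nat))))"
proof -
  have p_nonneg: "0 \<le> p x" if "x \<in> S" for x using p_ge[OF that] \<delta> by simp
  obtain R where R: "0 < R" "\<And>x. x \<in> S \<Longrightarrow> \<bar>x\<bar> \<le> R"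
    using compact_imp_bounded[OF S] by (auto simp: bounded_pos)
  obtain q where q: "continuous_on UNIV q" "\<And>z. 0 \<le> q z" "\<And>x. x \<in> S \<Longrightarrow> q x = p x"
    "integrable lborel q" "(\<integral>z. q z \<partial>lborel) \<le> (\<integral>x. indicator S x * p x \<partial>lborel) + \<eta> / 2"
    using continuous_extension_small_excess[OF S p_cont p_nonneg p_int half_gt_zero[OF \<eta>]] by blast
  define \<rho> where "\<rho> = min (\<eta> / 2) (\<eta> * \<delta>)"
  have \<rho>: "0 < \<rho>" "\<rho> \<le> \<eta> / 2" "\<rho> \<le> \<eta> * \<delta>" using \<eta> \<delta> by (auto simp: \<rho>_def)
  obtain h s J where h: "0 < h" and s: "0 < s"
    and riemann: "(\<Sum>j<J. h * q (- (R + 1) + real j * h)) \<le> (\<integral>z. q z \<partial>lborel) + \<rho>"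
    and smooth: "\<And>x. \<bar>x\<bar> \<le> R \<Longrightarrow> q x - \<rho> \<le> (\<Sum>j<J. h * q (- (R + 1) + real j * h)
        * logistic_kernel s (x - (- (R + 1) + real j * h)))"
    by (rule grid_smoothing_approx[OF q(1,2,4) R(1) \<rho>(1)]) blast
  define a where "a j = - (R + 1) + real j * h" for j
  define v where "v j = h * q (a j) / (1 + \<eta>)" for j
  have v_nonneg: "0 \<le> v j" for j using h q(2) \<eta> by (simp add: v_def)
  have "(\<Sum>j<J. v j) = (\<Sum>j<J. h * q (a j)) / (1 + \<eta>)"
    by (simp add: v_def sum_divide_distrib)
  also have "\<dots> \<le> 1"
    using riemann q(5) p_total \<rho>(2) \<eta> by (simp add: a_def)
  finally have v_sum: "(\<Sum>j<J. v j) \<le> 1" .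
  have "(1 - 2 * \<eta>) * p x \<le> (\<Sum>j<J. v j * logistic_kernel s (x - a j))" if x: "x \<in> S" for x
  proof -
    have "(1 - 2 * \<eta>) * (1 + \<eta>) * p x \<le> (1 - \<eta>) * p x"
      using p_nonneg[OF x] \<eta> by (intro mult_right_mono) (auto simp: algebra_simps)
    also have "\<dots> \<le> p x - \<rho>"
    proof -
      have "\<eta> * \<delta> \<le> \<eta> * p x" using p_ge[OF x] \<eta> by (intro mult_left_mono) auto
      then show ?thesis using \<rho>(3) by (simp add: algebra_simps)
    qed
    also have "\<dots> \<le> (\<Sum>j<J. h * q (a j) * logistic_kernel s (x - a j))"
      using smooth[OF R(2)[OF x]] q(3)[OF x] by (simp add: a_def)
    also have "\<dots> = (1 + \<eta>) * (\<Sum>j<J. v j * logistic_kernel s (x - a j))"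
      using \<eta> by (simp add: v_def sum_distrib_left)
    finally show ?thesis using \<eta> by (simp add: mult.commute mult.left_commute)
  qed
  then show ?thesis using s v_nonneg v_sum by blast
qed

lemma logistic_mixture_dominates:
  fixes S :: "real set" and p :: "real \<Rightarrow> real"
  assumes S: "compact S" and p_cont: "continuous_on S p"
    and p_int: "integrable lborel (\<lambda>x. indicator S x * p x)"
    and p_total: "(\<integral>x. indicator S x * p x \<partial>lborel) = 1"
    and \<delta>: "0 < \<delta>" and p_ge: "\<And>x. x \<in> S \<Longrightarrow> \<delta> \<le> p x" and c: "c < 1"
  shows "\<exists>N \<mu> \<sigma>. N \<ge> 1 \<and> (\<forall>i\<in>{1..N}. 0 < \<sigma> i) \<and>
    (\<forall>x\<in>S. c * p x \<le> logistic_mixture_density N \<mu> \<sigma> x)"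
proof -
  define \<eta> where "\<eta> = (1 - c) / 3"
  have \<eta>: "0 < \<eta>" using c by (simp add: \<eta>_def)
  obtain J :: nat and a v s where s: "0 < s" and v: "\<forall>j. 0 \<le> v j" "(\<Sum>j<J. v j) \<le> 1"
    and dom: "\<forall>x\<in>S. (1 - 2 * \<eta>) * p x \<le> (\<Sum>j<J. v j * logistic_kernel s (x - a j))"
    using weighted_logistic_mixture_dominates[OF S p_cont p_int p_total \<delta> p_ge \<eta>] by blast
  define N where "N = nat \<lceil>real J / (4 * s * \<eta> * \<delta>)\<rceil> + 1"
  have N: "N \<ge> 1" by (simp add: N_def)
  have "real J / (4 * s * \<eta> * \<delta>) < real N" unfolding N_def by linarith
  then have rounding_error: "real J / (4 * s * real N) \<le> \<eta> * \<delta>"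
    using s \<eta> \<delta> N by (simp add: field_simps)
  obtain \<mu> \<sigma> where \<sigma>: "\<forall>i\<in>{1..N}. 0 < \<sigma> i" and round: "\<And>x.
      (\<Sum>j<J. v j * logistic_kernel s (x - a j)) - real J / (4 * s * real N)
        \<le> logistic_mixture_density N \<mu> \<sigma> x"
    using logistic_mixture_rounding[OF N s _ v(2)] v(1) by blast
  have "c * p x \<le> logistic_mixture_density N \<mu> \<sigma> x" if x: "x \<in> S" for x
  proof -
    have "c * p x = (1 - 2 * \<eta>) * p x - \<eta> * p x" unfolding \<eta>_def by (simp add: field_simps)
    also have "\<dots> \<le> (1 - 2 * \<eta>) * p x - \<eta> * \<delta>"
      using p_ge[OF x] \<eta> by (simp add: mult_left_mono)
    finally show ?thesis using dom x rounding_error round[of x] by fastforce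
  qed
  then show ?thesis using N \<sigma> by blast
qed

lemma prob_space_density_has_bochner_integral_1:
  fixes f :: "'a \<Rightarrow> real"
  assumes "has_bochner_integral M f 1" "\<And>x. 0 \<le> f x"
  shows "prob_space (density M f)"
proof (rule prob_spaceI)
  have "emeasure (density M f) (space M) = (\<integral>\<^sup>+x. ennreal (f x) \<partial>M)"
    using borel_measurable_has_bochner_integral[OF assms(1)] by (simp add: emeasure_density)
  also have "\<dots> = ennreal (\<integral>x. f x \<partial>M)"
    using assms by (intro nn_integral_eq_integral) (auto simp: has_bochner_integral_iff)
  finally show "emeasure (density M f) (space (density M f)) = 1"
    using assms(1) by (simp add: has_bochner_integral_iff)
qed

lemma KL_div_Phi_inv_logistic_mixture_le:
  fixes p :: "real \<Rightarrow> real"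
  assumes N: "N \<ge> 1" and \<sigma>: "\<forall>i\<in>{1..N}. 0 < \<sigma> i"
    and p_int: "has_bochner_integral lborel p 1" and p_nonneg: "\<And>x. 0 \<le> p x"
    and p_le: "\<And>x. p x \<le> c * logistic_mixture_density N \<mu> \<sigma> x"
  shows "KL_div (distr (density lborel p) lborel (\<lambda>x. Phi_inv (logistic_mixture_cdf N \<mu> \<sigma> x)))
      std_normal \<le> ereal (ln c)"
proof -
  interpret cdf_with_positive_density "logistic_mixture_cdf N \<mu> \<sigma>" "logistic_mixture_density N \<mu> \<sigma>"
    using DERIV_logistic_mixture_cdf[OF \<sigma>] logistic_mixture_density_pos[OF N \<sigma>]
      logistic_mixture_density_measurable logistic_mixture_cdf_tendsto_at_bot[OF \<sigma>]
      logistic_mixture_cdf_tendsto_at_top[OF N \<sigma>]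
    by unfold_locales
  have "prob_space (density lborel p)"
    by (rule prob_space_density_has_bochner_integral_1[OF p_int p_nonneg])
  moreover have "p \<in> borel_measurable borel"
    using borel_measurable_has_bochner_integral[OF p_int] by simp
  ultimately have "KL_div (distr (density lborel p) lborel gaussianize) std_normal \<le> ereal (ln c)"
    by (rule KL_div_distr_gaussianize_le[OF _ _ p_nonneg p_le])
  then show ?thesis unfolding gaussianize_def[abs_def] .
qed

theorem mainTheorem3:
  fixes S :: "real set" and p :: "real \<Rightarrow> real" and \<delta> :: real
  assumes "compact S"
    and "continuous_on S p"
    and "\<forall>x\<in>S. 0 \<le> p x"
    and "has_bochner_integral lborel (\<lambda>x. indicator S x * p x) 1"
    and "\<delta> > 0"
    and "(INF x\<in>S. p x) > \<delta>"
  shows "\<forall>\<epsilon>>0. \<exists>N::nat. N \<ge> 1 \<and> (\<exists>\<mu> \<sigma> :: nat \<Rightarrow> real. (\<forall>i\<in>{1..N}. \<sigma> i > 0) \<and>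
           KL_div (distr (density lborel (\<lambda>x. ennreal (indicator S x * p x))) lborel
                     (\<lambda>x. Phi_inv ((1 / real N) * (\<Sum>i=1..N. sigmoid ((x - \<mu> i) / \<sigma> i)))))
                  (density lborel std_normal_density) < ereal \<epsilon>)"
proof (intro allI impI)
  fix \<epsilon> :: real assume \<epsilon>: "\<epsilon> > 0"
  have p_ge: "\<And>x. x \<in> S \<Longrightarrow> \<delta> \<le> p x"
    using cINF_lower[OF bdd_belowI2[of S 0 p]] assms(3,6) by force
  have p_int: "integrable lborel (\<lambda>x. indicator S x * p x)"
    and p_total: "(\<integral>x. indicator S x * p x \<partial>lborel) = 1"
    using assms(4) by (simp_all add: has_bochner_integral_iff)
  have "exp (- (\<epsilon> / 2)) < 1" using \<epsilon> by simp
  then obtain N \<mu> \<sigma> where N: "N \<ge> 1" and \<sigma>: "\<forall>i\<in>{1..N}. 0 < \<sigma> i"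
    and dom: "\<forall>x\<in>S. exp (- (\<epsilon> / 2)) * p x \<le> logistic_mixture_density N \<mu> \<sigma> x"
    using logistic_mixture_dominates[OF assms(1,2) p_int p_total assms(5) p_ge] by blast
  have "indicator S x * p x \<le> exp (\<epsilon> / 2) * logistic_mixture_density N \<mu> \<sigma> x" for x
    using dom logistic_mixture_density_pos[OF N \<sigma>, of \<mu> x]
    by (cases "x \<in> S") (auto simp: exp_minus field_simps)
  then have "KL_div (distr (density lborel (\<lambda>x. indicator S x * p x)) lborel
      (\<lambda>x. Phi_inv (logistic_mixture_cdf N \<mu> \<sigma> x))) std_normal \<le> ereal (ln (exp (\<epsilon> / 2)))"
    using assms(3) by (intro KL_div_Phi_inv_logistic_mixture_le N \<sigma> assms(4)) (auto simp: indicator_def)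
  also have "\<dots> < ereal \<epsilon>" using \<epsilon> by simp
  finally show "\<exists>N::nat. N \<ge> 1 \<and> (\<exists>\<mu> \<sigma> :: nat \<Rightarrow> real. (\<forall>i\<in>{1..N}. \<sigma> i > 0) \<and>
           KL_div (distr (density lborel (\<lambda>x. ennreal (indicator S x * p x))) lborel
                     (\<lambda>x. Phi_inv ((1 / real N) * (\<Sum>i=1..N. sigmoid ((x - \<mu> i) / \<sigma> i)))))
                  (density lborel std_normal_density) < ereal \<epsilon>)"
    using N \<sigma> unfolding logistic_mixture_cdf_def by blast
qed

end
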